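(* Let $n>2k-t$, $k>t$, and let $\mathcal{S}_p$ be a maximal set of $k$-spaces in $\mathrm{PG}(n,q)$ pairwise intersecting in at least a $t$-space. Let $\psi(\mathcal{S}_p)=\min\{\dim T: T\text{ a subspace},\ \dim(T\cap\alpha)\geq t\ \forall\alpha\in\mathcal{S}_p\}$ and let $\mathcal{T}$ be the set of all $\psi(\mathcal{S}_p)$-dimensional subspaces meeting every element of $\mathcal{S}_p$ in at least a $t$-space. If $\psi(\mathcal{S}_p)=t+1$ and $|\mathcal{T}|\leq 2$, then \[|\mathcal{S}_p|\leq 2\left[{n-t-1\atop k-t-1}\right]_q+(\theta_{t+1}\theta_{k-t}-\theta_{t+1}-1)\theta_{k-t}\left[{n-t-2\atop k-t-2}\right]_q.\]
   Context: Dimensions are projective; $\left[{n\atop k}\right]_q=\frac{(q^n-1)\cdots(q^{n-k+1}-1)}{(q^k-1)\cdots(q-1)}$ for $k>0$, $=1$ for $k=0$; $\theta_m=\frac{q^{m+1}-1}{q-1}$. Maximal means no further $k$-space can be added keeping the property. *)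

theory Defs
  imports "HOL-Analysis.Analysis"
begin

text \<open>PG(n,q) is modelled as the lattice of subspaces of the vector space 'a^'n over
  the finite field 'a (q = CARD('a)), where CARD('n) = n+1. A projective k-space is a
  vector subspace of (vector) dimension k+1.\<close>

definition proj_space :: "nat \<Rightarrow> ('a::field ^ 'n) set \<Rightarrow> bool" where
  "proj_space k V \<longleftrightarrow> vec.subspace V \<and> vec.dim V = k + 1"

definition meets_in :: "nat \<Rightarrow> ('a::field ^ 'n) set \<Rightarrow> ('a ^ 'n) set \<Rightarrow> bool" where
  "meets_in t A B \<longleftrightarrow> vec.dim (A \<inter> B) \<ge> t + 1"

definition t_intersecting :: "nat \<Rightarrow> nat \<Rightarrow> ('a::field ^ 'n) set set \<Rightarrow> bool" where
  "t_intersecting k t S \<longleftrightarrow> (\<forall>A\<in>S. proj_space k A) \<and> (\<forall>A\<in>S. \<forall>B\<in>S. meets_in t A B)"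

definition maximal_t_intersecting :: "nat \<Rightarrow> nat \<Rightarrow> ('a::field ^ 'n) set set \<Rightarrow> bool" where
  "maximal_t_intersecting k t S \<longleftrightarrow> t_intersecting k t S \<and>
     (\<forall>B. proj_space k B \<and> B \<notin> S \<longrightarrow> \<not> t_intersecting k t (insert B S))"

definition psi :: "nat \<Rightarrow> ('a::field ^ 'n) set set \<Rightarrow> nat" where
  "psi t S = (LEAST d. \<exists>T. proj_space d T \<and> (\<forall>A\<in>S. meets_in t T A))"

definition Tset :: "nat \<Rightarrow> ('a::field ^ 'n) set set \<Rightarrow> ('a ^ 'n) set set" where
  "Tset t S = {T. proj_space (psi t S) T \<and> (\<forall>A\<in>S. meets_in t T A)}"

text \<open>Gaussian binomial with integer arguments; 0 for negative lower index.\<close>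
definition qbinom :: "real \<Rightarrow> int \<Rightarrow> int \<Rightarrow> real" where
  "qbinom q n k = (if k < 0 then 0 else
     (\<Prod>i\<in>{0..<nat k}. (q ^ nat (n - int i) - 1) / (q ^ (i + 1) - 1)))"

definition theta :: "real \<Rightarrow> nat \<Rightarrow> real" where
  "theta q m = (q ^ (m + 1) - 1) / (q - 1)"

end

theory Submission
  imports Defs
begin

text \<open>
  Let T be a (t+1)-space meeting every member of S in at least a t-space. As psi(S) = t+1, no
  t-space lies in all members. A member either contains T, and at most [n-t-1, k-t-1] members do,
  or it meets T in a hyperplane sigma of T. For each of the theta_{t+1} hyperplanes sigma choose a
  member B not through sigma: a member A with A cap T = sigma contains a (t+1)-space tau through
  sigma in the span of B and T, other than T. That span has dimension at most k+1, so there are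
  at most theta_{t+1} (theta_{k-t} - 1) candidates tau, and at most one of them belongs to T(S);
  it lies in at most [n-t-1, k-t-1] members. Any other candidate tau meets some member C in only a
  (t-1)-space, and then every member through tau contains one of the at most theta_{k-t}
  (t+2)-spaces through tau in the span of tau and C, each lying in at most [n-t-2, k-t-2] members.
  Since n > 2k - t gives theta_{k-t} [n-t-2, k-t-2] <= [n-t-1, k-t-1], the count is largest when
  one candidate belongs to T(S), which is the stated bound.
\<close>

definition subspaces_between ::
    "('a::field ^ 'n) set \<Rightarrow> ('a ^ 'n) set \<Rightarrow> nat \<Rightarrow> ('a ^ 'n) set set" where
  "subspaces_between W X m = {U. vec.subspace U \<and> vec.dim U = m \<and> W \<subseteq> U \<and> U \<subseteq> X}"

lemma card_span_independent:
  fixes B :: "('a::{field,finite} ^ 'n) set"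
  assumes "vec.independent B"
  shows "card (vec.span B) = CARD('a) ^ card B"
proof -
  have "finite B" by simp
  then show ?thesis using assms
  proof (induction B rule: finite_induct)
    case empty
    then show ?case by (simp add: vec.span_empty)
  next
    case (insert v B)
    have indep: "vec.independent B" and v: "v \<notin> vec.span B"
      using insert.prems insert.hyps by (auto simp: vec.independent_insert)
    let ?f = "\<lambda>(c, y). c *s v + y"
    have "vec.span (insert v B) = ?f ` (UNIV \<times> vec.span B)"
    proof (intro equalityI subsetI)
      fix x assume "x \<in> vec.span (insert v B)"
      then obtain c where "x - c *s v \<in> vec.span B" by (auto simp: vec.span_insert)
      then show "x \<in> ?f ` (UNIV \<times> vec.span B)" by (intro image_eqI[of _ _ "(c, x - c *s v)"]) auto
    qed (auto intro!: vec.span_add vec.span_scale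
        simp: vec.span_base vec.span_mono[of B "insert v B", THEN subsetD, OF subset_insertI])
    moreover have "inj_on ?f (UNIV \<times> vec.span B)"
    proof (rule inj_onI, clarsimp)
      fix c c' y y'
      assume y: "y \<in> vec.span B" "y' \<in> vec.span B" and eq: "c *s v + y = c' *s v + y'"
      have "(c - c') *s v = y' - y" using eq by (simp add: algebra_simps vector_sub_rdistrib)
      then have "(c - c') *s v \<in> vec.span B" using vec.span_diff[OF y(2,1)] by simp
      have "c = c'"
      proof (rule ccontr)
        assume "c \<noteq> c'"
        then have "v = inverse (c - c') *s ((c - c') *s v)"
          by (metis vector_smult_assoc left_inverse right_minus_eq vector_smult_lid)
        with \<open>(c - c') *s v \<in> vec.span B\<close> v show False by (metis vec.span_scale)
      qed
      with eq show "c = c' \<and> y = y'" by simp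
    qed
    ultimately have "card (vec.span (insert v B)) = CARD('a) * card (vec.span B)"
      by (simp add: card_image card_cartesian_product)
    then show ?case using insert.IH[OF indep] insert.hyps by simp
  qed
qed

lemma card_subspace:
  fixes U :: "('a::{field,finite} ^ 'n) set"
  assumes "vec.subspace U"
  shows "card U = CARD('a) ^ vec.dim U"
proof -
  obtain B where "B \<subseteq> U" "vec.independent B" "U \<subseteq> vec.span B" "card B = vec.dim U"
    using vec.basis_exists by blast
  moreover from this have "vec.span B = U"
    using assms vec.span_minimal by blast
  ultimately show ?thesis using card_span_independent by metis
qed

text \<open>Lists of vectors of X independent modulo W. Counting them directly and through the subspace
  each spans with W gives the Gaussian binomial.\<close>
fun independent_extensions ::
    "('a::field ^ 'n) set \<Rightarrow> ('a ^ 'n) set \<Rightarrow> nat \<Rightarrow> ('a ^ 'n) list set" where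
  "independent_extensions W X 0 = {[]}"
| "independent_extensions W X (Suc r) =
     (\<Union>vs\<in>independent_extensions W X r. (\<lambda>v. v # vs) ` (X - vec.span (W \<union> set vs)))"

lemma independent_extensionsD:
  "vs \<in> independent_extensions W X r \<Longrightarrow> set vs \<subseteq> X \<and> vec.dim (W \<union> set vs) = vec.dim W + r"
proof (induction r arbitrary: vs)
  case (Suc r)
  then obtain ws v where vs: "vs = v # ws" "ws \<in> independent_extensions W X r"
    and v: "v \<in> X" "v \<notin> vec.span (W \<union> set ws)"
    by auto
  have "W \<union> set vs = insert v (W \<union> set ws)" using vs by auto
  then show ?case using Suc.IH[OF vs(2)] vs v by (auto simp: vec.dim_insert)
qed simp

lemma independent_extensions_subset_iff:
  assumes "Y \<subseteq> X"
  shows "vs \<in> independent_extensions W Y r \<longleftrightarrow> vs \<in> independent_extensions W X r \<and> set vs \<subseteq> Y"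
  using assms by (induction r arbitrary: vs) (auto simp: image_iff)

lemma finite_independent_extensions[simp]:
  fixes W X :: "('a::{field,finite} ^ 'n) set"
  shows "finite (independent_extensions W X r)"
  by (induction r) auto

lemma card_independent_extensions:
  fixes W X :: "('a::{field,finite} ^ 'n) set"
  assumes "vec.subspace W" "vec.subspace X" "W \<subseteq> X"
  shows "card (independent_extensions W X r) = (\<Prod>i<r. CARD('a) ^ vec.dim X - CARD('a) ^ (vec.dim W + i))"
proof (induction r)
  case (Suc r)
  have card_step: "card ((\<lambda>v. v # vs) ` (X - vec.span (W \<union> set vs)))
      = CARD('a) ^ vec.dim X - CARD('a) ^ (vec.dim W + r)"
    if vs: "vs \<in> independent_extensions W X r" for vs
  proof -
    have "vec.span (W \<union> set vs) \<subseteq> X"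
      using assms independent_extensionsD[OF vs] vec.span_minimal by blast
    moreover have "inj_on (\<lambda>v. v # vs) (X - vec.span (W \<union> set vs))"
      by (simp add: inj_on_def)
    ultimately show ?thesis
      using independent_extensionsD[OF vs] card_subspace[OF assms(2)]
        card_subspace[OF vec.subspace_span, of "W \<union> set vs"]
      by (simp add: card_image card_Diff_subset vec.dim_span)
  qed
  have "card (independent_extensions W X (Suc r))
      = (\<Sum>vs\<in>independent_extensions W X r. card ((\<lambda>v. v # vs) ` (X - vec.span (W \<union> set vs))))"
    by (simp only: independent_extensions.simps, rule card_UN_disjoint) auto
  then show ?case using Suc.IH card_step by simp
qed simp

lemma card_subspaces_between_mult:
  fixes W X :: "('a::{field,finite} ^ 'n) set"
  assumes "vec.subspace W" "vec.subspace X" "W \<subseteq> X" "vec.dim W \<le> m"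
  shows "card (subspaces_between W X m) * (\<Prod>i<m - vec.dim W. CARD('a) ^ m - CARD('a) ^ (vec.dim W + i))
       = (\<Prod>i<m - vec.dim W. CARD('a) ^ vec.dim X - CARD('a) ^ (vec.dim W + i))"
proof -
  define r where "r = m - vec.dim W"
  have span_eq: "vec.span (W \<union> set vs) = U"
    if "U \<in> subspaces_between W X m" "vs \<in> independent_extensions W U r" for U vs
    using that independent_extensionsD[OF that(2)] assms(4) vec.span_minimal[of "W \<union> set vs" U]
    by (intro vec.subspace_dim_equal) (auto simp: subspaces_between_def r_def vec.dim_span)
  have "independent_extensions W X r = (\<Union>U\<in>subspaces_between W X m. independent_extensions W U r)"
  proof (intro equalityI subsetI)
    fix vs assume vs: "vs \<in> independent_extensions W X r"
    let ?U = "vec.span (W \<union> set vs)"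
    have "?U \<in> subspaces_between W X m"
      using independent_extensionsD[OF vs] assms vec.span_minimal[of "W \<union> set vs" X]
      by (auto simp: subspaces_between_def vec.dim_span r_def intro: vec.span_base)
    moreover have "vs \<in> independent_extensions W ?U r"
      using vs calculation by (auto simp: subspaces_between_def independent_extensions_subset_iff
          intro: vec.span_base)
    ultimately show "vs \<in> (\<Union>U\<in>subspaces_between W X m. independent_extensions W U r)" by blast
  qed (auto simp: subspaces_between_def independent_extensions_subset_iff)
  moreover have "independent_extensions W U r \<inter> independent_extensions W U' r = {}"
    if "U \<in> subspaces_between W X m" "U' \<in> subspaces_between W X m" "U \<noteq> U'" for U U'
    using that span_eq by blast
  ultimately have "card (independent_extensions W X r)
      = (\<Sum>U\<in>subspaces_between W X m. card (independent_extensions W U r))"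
    by (simp add: card_UN_disjoint finite_independent_extensions)
  also have "\<dots> = card (subspaces_between W X m) * (\<Prod>i<r. CARD('a) ^ m - CARD('a) ^ (vec.dim W + i))"
    using assms(1) by (simp add: card_independent_extensions subspaces_between_def)
  finally show ?thesis using card_independent_extensions[OF assms(1-3)] r_def by simp
qed

lemma real_card_field_ge_2: "2 \<le> real CARD('a::{field,finite})"
proof -
  have "card {0::'a, 1} \<le> CARD('a)" by (rule card_mono) auto
  then show ?thesis by simp
qed

lemma qbinom_eq_prod:
  "qbinom q n (int a) = (\<Prod>i<a. q ^ nat (n - int i) - 1) / (\<Prod>i<a. q ^ (i + 1) - 1)"
  by (simp add: qbinom_def atLeast0LessThan prod_dividef)

lemma qbinom_Suc:
  "qbinom q n (int a + 1) = qbinom q (n - 1) (int a) * (q ^ nat n - 1) / (q ^ (a + 1) - 1)"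
proof -
  have "(\<Prod>i<Suc a. q ^ nat (n - int i) - 1) = (q ^ nat n - 1) * (\<Prod>i<a. q ^ nat (n - 1 - int i) - 1)"
    unfolding prod.lessThan_Suc_shift by (simp add: algebra_simps)
  then show ?thesis
    using qbinom_eq_prod[of q n "Suc a"] qbinom_eq_prod[of q "n - 1" a] by (simp add: mult.commute add.commute)
qed

lemma qbinom_nonneg: "1 \<le> q \<Longrightarrow> 0 \<le> qbinom q n k"
  by (auto simp: qbinom_def one_le_power simp del: power_Suc intro!: prod_nonneg divide_nonneg_nonneg)

lemma theta_nonneg: "1 \<le> q \<Longrightarrow> 0 \<le> theta q m"
  by (simp add: theta_def one_le_power divide_nonneg_nonneg del: power_Suc)

lemma qbinom_eq_theta:
  assumes "1 < q"
  shows "qbinom q (int d + 1) (int d) = theta q d"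
proof (induction d)
  case 0
  then show ?case using assms by (simp add: qbinom_def theta_def)
next
  case (Suc d)
  have nonzero: "q ^ (d + 1) - 1 \<noteq> 0" "q - 1 \<noteq> 0"
    using assms one_less_power[of q "d + 1"] by auto
  have "int (Suc d) + 1 = int d + 2" "int (Suc d) = int d + 1" "int d + 2 - 1 = int d + 1"
    "nat (int d + 2) = d + 2"
    by simp_all
  then have "qbinom q (int (Suc d) + 1) (int (Suc d))
      = qbinom q (int d + 1) (int d) * (q ^ (d + 2) - 1) / (q ^ (d + 1) - 1)"
    using qbinom_Suc[of q "int d + 2" d] by (simp only:)
  also have "\<dots> = (q ^ (d + 2) - 1) / (q - 1)"
    unfolding Suc theta_def using nonzero by simp
  also have "\<dots> = theta q (Suc d)"
    by (simp add: theta_def)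
  finally show ?case .
qed

lemma theta_mult_qbinom_le_qbinom_Suc:
  fixes q :: real
  assumes q: "2 \<le> q" and M: "2 * a + 4 \<le> M"
  shows "theta q (a + 2) * qbinom q (int M - 1) (int a) \<le> qbinom q (int M) (int a + 1)"
proof -
  define A where "A = q ^ (a + 3)"
  define B where "B = q ^ (a + 1)"
  define C where "C = q ^ M"
  have "2 * a + 4 = (a + 3) + (a + 1)" by simp
  then have "A * B \<le> C"
    unfolding A_def B_def C_def using q M by (simp only: power_add[symmetric]) (intro power_increasing, auto)
  moreover have "1 \<le> A" "1 < B" "1 \<le> C"
    unfolding A_def B_def C_def using q one_less_power[of q "a + 1"] by (simp_all add: one_le_power)
  moreover have "(A - 1) * (B - 1) = A * B - A - B + 1" by (simp add: algebra_simps)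
  moreover have "C - 1 \<le> (C - 1) * (q - 1)"
    using mult_left_mono[of 1 "q - 1" "C - 1"] q \<open>1 \<le> C\<close> by simp
  ultimately have "(A - 1) * (B - 1) \<le> (C - 1) * (q - 1)" by linarith
  then have "(A - 1) / (q - 1) \<le> (C - 1) / (B - 1)"
    using q \<open>1 < B\<close> by (simp add: field_simps)
  moreover have "theta q (a + 2) = (A - 1) / (q - 1)"
  proof -
    have "a + 2 + 1 = a + 3" by simp
    then show ?thesis by (simp only: theta_def A_def)
  qed
  ultimately have "theta q (a + 2) \<le> (C - 1) / (B - 1)" by simp
  then have "theta q (a + 2) * qbinom q (int M - 1) (int a)
      \<le> (C - 1) / (B - 1) * qbinom q (int M - 1) (int a)"
    using q by (intro mult_right_mono qbinom_nonneg) auto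
  also have "\<dots> = qbinom q (int M) (int a + 1)"
    using qbinom_Suc[of q "int M" a] by (simp add: B_def C_def)
  finally show ?thesis .
qed

lemma theta_mult_qbinom_le_qbinom:
  fixes q :: real
  assumes q: "2 \<le> q" and "t < k" and N: "2 * k - t + 2 \<le> N"
  shows "theta q (k - t) * qbinom q (int N - int t - 3) (int k - int t - 2)
    \<le> qbinom q (int N - int t - 2) (int k - int t - 1)"
proof (cases "t + 2 \<le> k")
  case True
  define a where "a = k - t - 2"
  define M where "M = N - t - 2"
  have "2 * a + 4 \<le> M" "int N - int t - 2 = int M" "int k - int t - 2 = int a" "k - t = a + 2"
    using True N unfolding a_def M_def by auto
  then show ?thesis using theta_mult_qbinom_le_qbinom_Suc[OF q, of a M] by (simp add: algebra_simps)
next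
  case False
  \<comment> \<open>then k = t + 1, and a Gaussian binomial with negative lower index is 0\<close>
  then have "qbinom q (int N - int t - 3) (int k - int t - 2) = 0"
    using \<open>t < k\<close> by (simp add: qbinom_def)
  then show ?thesis using q by (simp add: qbinom_nonneg)
qed

lemma prod_pow_diff_pow:
  fixes Q :: nat
  assumes "1 \<le> Q" "w + r \<le> y"
  shows "(\<Prod>i<r. real (Q ^ y - Q ^ (w + i)))
    = (\<Prod>i<r. real Q ^ (w + i)) * (\<Prod>i<r. real Q ^ (y - (w + i)) - 1)"
  unfolding prod.distrib[symmetric]
proof (rule prod.cong[OF refl])
  fix i assume "i \<in> {..<r}"
  then have le: "w + i \<le> y" using assms(2) by simp
  then have "real Q ^ y = real Q ^ (w + i) * real Q ^ (y - (w + i))" by (simp flip: power_add)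
  then show "real (Q ^ y - Q ^ (w + i)) = real Q ^ (w + i) * (real Q ^ (y - (w + i)) - 1)"
    using le assms(1) by (simp add: of_nat_diff power_increasing algebra_simps)
qed

lemma card_subspaces_between:
  fixes W X :: "('a::{field,finite} ^ 'n) set"
  assumes "vec.subspace W" "vec.subspace X" "W \<subseteq> X" "vec.dim W \<le> m" "m \<le> vec.dim X"
  shows "real (card (subspaces_between W X m))
    = qbinom (real CARD('a)) (int (vec.dim X) - int (vec.dim W)) (int m - int (vec.dim W))"
proof -
  define q where "q = real CARD('a)"
  define w where "w = vec.dim W"
  define x where "x = vec.dim X"
  define r where "r = m - vec.dim W"
  have q: "2 \<le> q" unfolding q_def by (rule real_card_field_ge_2)
  have Q: "1 \<le> CARD('a)" using finite_UNIV_card_ge_0[where 'a='a] by simp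
  have m: "w + r \<le> m" and x: "w + r \<le> x" using assms(4,5) by (simp_all add: w_def x_def r_def)
  have "real (card (subspaces_between W X m)) * (\<Prod>i<r. real (CARD('a) ^ m - CARD('a) ^ (w + i)))
      = (\<Prod>i<r. real (CARD('a) ^ x - CARD('a) ^ (w + i)))"
    using card_subspaces_between_mult[OF assms(1-4), THEN arg_cong[where f = real]]
    unfolding w_def x_def r_def of_nat_mult of_nat_prod .
  then have "(\<Prod>i<r. q ^ (w + i)) * (real (card (subspaces_between W X m)) * (\<Prod>i<r. q ^ (m - (w + i)) - 1))
      = (\<Prod>i<r. q ^ (w + i)) * (\<Prod>i<r. q ^ (x - (w + i)) - 1)"
    unfolding prod_pow_diff_pow[OF Q m] prod_pow_diff_pow[OF Q x] q_def by (simp only: mult.left_commute)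
  moreover have "(\<Prod>i<r. q ^ (w + i)) \<noteq> 0" using q by simp
  ultimately have "real (card (subspaces_between W X m)) * (\<Prod>i<r. q ^ (m - (w + i)) - 1)
      = (\<Prod>i<r. q ^ (x - (w + i)) - 1)"
    by (simp only: mult_cancel_left) simp
  moreover have "(\<Prod>i<r. q ^ (m - (w + i)) - 1) = (\<Prod>i<r. q ^ (i + 1) - 1)"
  proof -
    have "m - (w + i) = r - Suc i + 1" if "i < r" for i using that by (simp add: r_def w_def)
    then have "(\<Prod>i<r. q ^ (m - (w + i)) - 1) = (\<Prod>i<r. q ^ (r - Suc i + 1) - 1)"
      by (intro prod.cong) simp_all
    then show ?thesis using prod.nat_diff_reindex[of "\<lambda>i. q ^ (i + 1) - 1" r] by simp
  qed
  moreover have "(\<Prod>i<r. q ^ (i + 1) - 1) \<noteq> 0"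
  proof -
    have "q ^ Suc i \<noteq> 1" for i using q one_less_power[of q "Suc i"] by auto
    then show ?thesis by simp
  qed
  ultimately have "real (card (subspaces_between W X m))
      = (\<Prod>i<r. q ^ (x - (w + i)) - 1) / (\<Prod>i<r. q ^ (i + 1) - 1)"
    by (metis nonzero_eq_divide_eq)
  also have "\<dots> = qbinom q (int x - int w) (int m - int w)"
    using assms(4) qbinom_eq_prod[of q "int x - int w" r]
    by (simp add: w_def r_def of_nat_diff nat_diff_distrib' algebra_simps flip: of_nat_add)
  finally show ?thesis unfolding q_def w_def x_def .
qed

lemma card_subspaces_containing:
  fixes W :: "('a::{field,finite} ^ 'n) set"
  assumes "vec.subspace W" "m \<le> CARD('n)"
  shows "real (card (subspaces_between W UNIV m))
    = qbinom (real CARD('a)) (int CARD('n) - int (vec.dim W)) (int m - int (vec.dim W))"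
proof (cases "vec.dim W \<le> m")
  case True
  then show ?thesis
    using card_subspaces_between[OF assms(1) vec.subspace_UNIV subset_UNIV True] assms(2)
    by (simp add: vec.dim_UNIV card_cart_basis)
next
  case False
  then have "subspaces_between W UNIV m = {}"
    by (auto simp: subspaces_between_def dest: vec.dim_subset)
  then show ?thesis using False by (simp add: qbinom_def)
qed

lemma card_hyperplanes:
  fixes T :: "('a::{field,finite} ^ 'n) set"
  assumes "vec.subspace T" "vec.dim T = d + 1"
  shows "real (card (subspaces_between {0} T d)) = theta (real CARD('a)) d"
proof -
  have "1 < real CARD('a)" using real_card_field_ge_2[where 'a='a] by linarith
  then show ?thesis
    using card_subspaces_between[of "{0}" T d] qbinom_eq_theta[of "real CARD('a)" d]
      assms vec.subspace_0[OF assms(1)]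
    by (simp add: add.commute)
qed

lemma card_subspaces_between_Suc_le_theta:
  fixes W X :: "('a::{field,finite} ^ 'n) set"
  assumes "vec.subspace W" "vec.subspace X" "W \<subseteq> X" "vec.dim X \<le> vec.dim W + e + 1"
  shows "real (card (subspaces_between W X (vec.dim W + 1))) \<le> theta (real CARD('a)) e"
proof (cases "vec.dim W + 1 \<le> vec.dim X")
  case True
  define q where "q = real CARD('a)"
  define d where "d = vec.dim X - vec.dim W"
  have q: "1 < q" using real_card_field_ge_2[where 'a='a] unfolding q_def by linarith
  have "real (card (subspaces_between W X (vec.dim W + 1))) = qbinom q (int d) 1"
    using card_subspaces_between[OF assms(1-3), of "vec.dim W + 1"] True
    by (simp add: q_def d_def of_nat_diff)
  also have "\<dots> = (q ^ d - 1) / (q - 1)" by (simp add: qbinom_def)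
  also have "\<dots> \<le> (q ^ (e + 1) - 1) / (q - 1)"
    using q assms(4) by (intro divide_right_mono diff_right_mono power_increasing) (auto simp: d_def)
  finally show ?thesis unfolding theta_def q_def .
next
  case False
  then have "subspaces_between W X (vec.dim W + 1) = {}"
    by (auto simp: subspaces_between_def dest: vec.dim_subset)
  then have "real (card (subspaces_between W X (vec.dim W + 1))) = 0" by simp
  also have "0 \<le> theta (real CARD('a)) e"
    using real_card_field_ge_2[where 'a='a] by (intro theta_nonneg) linarith
  finally show ?thesis .
qed

lemma dim_span_Un_add_dim_Int:
  fixes X Y :: "('a::field ^ 'n) set"
  assumes "vec.subspace X" "vec.subspace Y"
  shows "vec.dim (vec.span (X \<union> Y)) + vec.dim (X \<inter> Y) = vec.dim X + vec.dim Y"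
proof -
  have "vec.span X = X" "vec.span Y = Y" using assms vec.span_eq_iff by blast+
  then have "vec.span (X \<union> Y) = {x + y |x y. x \<in> X \<and> y \<in> Y}"
    unfolding vec.span_Un by (simp only:)
  then show ?thesis using vec.dim_sums_Int[OF assms] by simp
qed

lemma dim_add_le_dim_Int_add:
  fixes X Y Z :: "('a::field ^ 'n) set"
  assumes "vec.subspace X" "vec.subspace Y" "vec.subspace Z" "X \<subseteq> Z" "Y \<subseteq> Z"
  shows "vec.dim X + vec.dim Y \<le> vec.dim (X \<inter> Y) + vec.dim Z"
proof -
  have "vec.span (X \<union> Y) \<subseteq> Z" using assms by (intro vec.span_minimal) auto
  then have "vec.dim (vec.span (X \<union> Y)) \<le> vec.dim Z" by (rule vec.dim_subset)
  then show ?thesis using dim_span_Un_add_dim_Int[OF assms(1,2)] by linarith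
qed

lemma span_insert_mem_subspaces_between:
  fixes X Z :: "('a::field ^ 'n) set"
  assumes "vec.subspace Z" "vec.subspace X" "Z \<subseteq> X" "v \<in> X" "v \<notin> Z"
  shows "vec.span (insert v Z) \<in> subspaces_between Z X (vec.dim Z + 1)"
proof -
  have "v \<notin> vec.span Z" using assms(1,5) vec.span_eq_iff by blast
  then show ?thesis
    using assms vec.span_minimal[of "insert v Z" X]
    by (auto simp: subspaces_between_def vec.dim_insert intro: vec.span_base)
qed

lemma sum_le_card_mult_add:
  fixes f :: "'b \<Rightarrow> real"
  assumes "finite X" "\<And>x. x \<in> X \<Longrightarrow> f x \<le> (if x \<in> Y then a else b)"
    and "card (X \<inter> Y) \<le> 1" "b \<le> a"
  shows "sum f X \<le> real (card X) * b + (a - b)"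
proof -
  have "sum f X \<le> (\<Sum>x\<in>X. b + (if x \<in> Y then a - b else 0))"
  proof (rule sum_mono)
    fix x assume "x \<in> X"
    then show "f x \<le> b + (if x \<in> Y then a - b else 0)" using assms(2)[of x] by (cases "x \<in> Y") auto
  qed
  also have "\<dots> = real (card X) * b + real (card (X \<inter> Y)) * (a - b)"
    using sum.inter_restrict[OF assms(1), of "\<lambda>_. a - b" Y] by (simp add: sum.distrib)
  also have "\<dots> \<le> real (card X) * b + (a - b)"
    using assms(3,4) mult_right_mono[of "real (card (X \<inter> Y))" 1 "a - b"] by simp
  finally show ?thesis .
qed

lemma card_le_card_containing_add_sum:
  fixes S :: "'b set set"
  assumes "finite S" "finite Taus" "\<And>A. A \<in> S \<Longrightarrow> T \<subseteq> A \<or> (\<exists>\<tau>\<in>Taus. \<tau> \<subseteq> A)"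
  shows "card S \<le> card {A \<in> S. T \<subseteq> A} + (\<Sum>\<tau>\<in>Taus. card {A \<in> S. \<tau> \<subseteq> A})"
proof -
  have "S = {A \<in> S. T \<subseteq> A} \<union> (\<Union>\<tau>\<in>Taus. {A \<in> S. \<tau> \<subseteq> A})" using assms(3) by blast
  then have "card S \<le> card {A \<in> S. T \<subseteq> A} + card (\<Union>\<tau>\<in>Taus. {A \<in> S. \<tau> \<subseteq> A})"
    by (metis card_Un_le)
  also have "\<dots> \<le> card {A \<in> S. T \<subseteq> A} + (\<Sum>\<tau>\<in>Taus. card {A \<in> S. \<tau> \<subseteq> A})"
    using card_UN_le[OF assms(2)] by (rule add_left_mono)
  finally show ?thesis .
qed

text \<open>Dimensions are vector dimensions: a projective t-space has vec.dim t + 1.\<close>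

locale t_intersecting_family =
  fixes S :: "('a::{field,finite} ^ 'n) set set" and k t :: nat
  assumes t_intersecting: "t_intersecting k t S"
begin

lemma subspace_member: "A \<in> S \<Longrightarrow> vec.subspace A"
  using t_intersecting by (simp add: t_intersecting_def proj_space_def)

lemma dim_member: "A \<in> S \<Longrightarrow> vec.dim A = k + 1"
  using t_intersecting by (simp add: t_intersecting_def proj_space_def)

lemma dim_Int_members: "A \<in> S \<Longrightarrow> B \<in> S \<Longrightarrow> t + 1 \<le> vec.dim (A \<inter> B)"
  using t_intersecting by (simp add: t_intersecting_def meets_in_def)

lemma Tset_nonempty:
  assumes "t \<le> k"
  shows "Tset t S \<noteq> {}"
proof -
  have "proj_space (CARD('n) - 1) (UNIV :: ('a ^ 'n) set)"
    by (simp add: proj_space_def vec.dim_UNIV card_cart_basis Suc_leI)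
  moreover have "meets_in t UNIV A" if "A \<in> S" for A
    using that assms by (simp add: meets_in_def dim_member)
  ultimately have "\<exists>d T. proj_space d T \<and> (\<forall>A\<in>S. meets_in t T A)" by blast
  from LeastI_ex[OF this] show ?thesis by (auto simp: Tset_def psi_def)
qed

lemma card_members_containing_le:
  assumes "vec.subspace W" "k < CARD('n)"
  shows "real (card {A \<in> S. W \<subseteq> A})
    \<le> qbinom (real CARD('a)) (int CARD('n) - int (vec.dim W)) (int k + 1 - int (vec.dim W))"
proof -
  have "{A \<in> S. W \<subseteq> A} \<subseteq> subspaces_between W UNIV (k + 1)"
    by (auto simp: subspaces_between_def subspace_member dim_member)
  then have "card {A \<in> S. W \<subseteq> A} \<le> card (subspaces_between W UNIV (k + 1))"
    by (intro card_mono) auto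
  then show ?thesis using card_subspaces_containing[OF assms(1), of "k + 1"] assms(2)
    by (simp add: add.commute)
qed

lemma members_containing_subset_skew:
  assumes \<tau>: "vec.subspace \<tau>" and C: "C \<in> S" "vec.dim (\<tau> \<inter> C) \<le> t"
  shows "{A \<in> S. \<tau> \<subseteq> A}
    \<subseteq> (\<Union>\<rho>\<in>subspaces_between \<tau> (vec.span (\<tau> \<union> C)) (vec.dim \<tau> + 1). subspaces_between \<rho> UNIV (k + 1))"
proof
  fix A assume "A \<in> {A \<in> S. \<tau> \<subseteq> A}"
  then have A: "A \<in> S" "\<tau> \<subseteq> A" by auto
  have "\<not> A \<inter> C \<subseteq> \<tau>"
  proof
    assume "A \<inter> C \<subseteq> \<tau>"
    then have "vec.dim (A \<inter> C) \<le> vec.dim (\<tau> \<inter> C)" by (intro vec.dim_subset) auto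
    then show False using dim_Int_members[OF A(1) C(1)] C(2) by simp
  qed
  then obtain w where w: "w \<in> A" "w \<in> C" "w \<notin> \<tau>" by blast
  let ?\<rho> = "vec.span (insert w \<tau>)"
  have "?\<rho> \<in> subspaces_between \<tau> A (vec.dim \<tau> + 1)"
    by (rule span_insert_mem_subspaces_between[OF \<tau> subspace_member[OF A(1)] A(2) w(1) w(3)])
  moreover have "?\<rho> \<subseteq> vec.span (\<tau> \<union> C)" using w(2) by (intro vec.span_mono) auto
  ultimately show "A \<in> (\<Union>\<rho>\<in>subspaces_between \<tau> (vec.span (\<tau> \<union> C)) (vec.dim \<tau> + 1).
      subspaces_between \<rho> UNIV (k + 1))"
    using A by (auto simp: subspaces_between_def subspace_member dim_member)
qed

lemma card_members_containing_le_skew: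
  assumes \<tau>: "vec.subspace \<tau>" "vec.dim \<tau> = t + 2"
    and C: "C \<in> S" "vec.dim (\<tau> \<inter> C) = t" and "k < CARD('n)"
  shows "real (card {A \<in> S. \<tau> \<subseteq> A})
    \<le> theta (real CARD('a)) (k - t) * qbinom (real CARD('a)) (int CARD('n) - int t - 3) (int k - int t - 2)"
proof -
  define R where "R = subspaces_between \<tau> (vec.span (\<tau> \<union> C)) (vec.dim \<tau> + 1)"
  define c2 where "c2 = qbinom (real CARD('a)) (int CARD('n) - int t - 3) (int k - int t - 2)"
  have "card {A \<in> S. \<tau> \<subseteq> A} \<le> (\<Sum>\<rho>\<in>R. card (subspaces_between \<rho> UNIV (k + 1)))"
    using members_containing_subset_skew[OF \<tau>(1) C(1)] C(2) unfolding R_def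
    by (intro le_trans[OF card_mono card_UN_le]) (simp_all add: finite)
  then have "real (card {A \<in> S. \<tau> \<subseteq> A}) \<le> (\<Sum>\<rho>\<in>R. real (card (subspaces_between \<rho> UNIV (k + 1))))"
    unfolding of_nat_sum[symmetric] of_nat_le_iff .
  also have "\<dots> = (\<Sum>\<rho>\<in>R. c2)"
  proof (rule sum.cong[OF refl])
    fix \<rho> assume "\<rho> \<in> R"
    then have "vec.subspace \<rho>" "vec.dim \<rho> = t + 3" using \<tau>(2) by (auto simp: R_def subspaces_between_def)
    then show "real (card (subspaces_between \<rho> UNIV (k + 1))) = c2"
      using card_subspaces_containing[of \<rho> "k + 1"] \<open>k < CARD('n)\<close> by (simp add: c2_def algebra_simps)
  qed
  also have "\<dots> \<le> theta (real CARD('a)) (k - t) * c2"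
    unfolding sum_constant
  proof (rule mult_right_mono)
    have "vec.dim (vec.span (\<tau> \<union> C)) + t = t + 2 + (k + 1)"
      using dim_span_Un_add_dim_Int[OF \<tau>(1) subspace_member[OF C(1)]] \<tau>(2) C dim_member by simp
    then show "real (card R) \<le> theta (real CARD('a)) (k - t)"
      unfolding R_def using \<tau> by (intro card_subspaces_between_Suc_le_theta) (auto intro: vec.span_base)
    show "0 \<le> c2"
      unfolding c2_def using real_card_field_ge_2[where 'a='a] by (intro qbinom_nonneg) linarith
  qed
  finally show ?thesis unfolding c2_def .
qed

lemma card_members_containing_le_cases:
  assumes psi: "psi t S = t + 1" and \<tau>: "vec.subspace \<tau>" "vec.dim \<tau> = t + 2"
    and meets: "\<forall>C\<in>S. t \<le> vec.dim (\<tau> \<inter> C)" and k: "k < CARD('n)"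
  shows "real (card {A \<in> S. \<tau> \<subseteq> A})
    \<le> (if \<tau> \<in> Tset t S then qbinom (real CARD('a)) (int CARD('n) - int t - 2) (int k - int t - 1)
       else theta (real CARD('a)) (k - t) * qbinom (real CARD('a)) (int CARD('n) - int t - 3) (int k - int t - 2))"
proof (cases "\<tau> \<in> Tset t S")
  case True
  then show ?thesis using card_members_containing_le[OF \<tau>(1) k] \<tau>(2) by (simp add: algebra_simps)
next
  case False
  then obtain C where "C \<in> S" "vec.dim (\<tau> \<inter> C) < t + 1"
    using \<tau> psi by (auto simp: Tset_def proj_space_def meets_in_def)
  moreover from this have "vec.dim (\<tau> \<inter> C) = t" using meets by fastforce
  ultimately show ?thesis using False card_members_containing_le_skew[OF \<tau> _ _ k] by simp
qed

context
  fixes T :: "('a ^ 'n) set"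
  assumes T_Tset: "T \<in> Tset t S" and psi_eq: "psi t S = t + 1"
begin

lemma subspace_T: "vec.subspace T"
  using T_Tset psi_eq by (simp add: Tset_def proj_space_def)

lemma dim_T: "vec.dim T = t + 2"
  using T_Tset psi_eq by (simp add: Tset_def proj_space_def)

lemma dim_T_Int_member: "A \<in> S \<Longrightarrow> t + 1 \<le> vec.dim (T \<inter> A)"
  using T_Tset by (simp add: Tset_def meets_in_def)

lemma hyperplane_not_in_all_members:
  assumes "\<sigma> \<in> subspaces_between {0} T (t + 1)"
  shows "\<exists>B\<in>S. \<not> \<sigma> \<subseteq> B"
proof (rule ccontr)
  assume "\<not> (\<exists>B\<in>S. \<not> \<sigma> \<subseteq> B)"
  then have "proj_space t \<sigma> \<and> (\<forall>A\<in>S. meets_in t \<sigma> A)"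
    using assms by (auto simp: subspaces_between_def proj_space_def meets_in_def Int_absorb2)
  then have "psi t S \<le> t" unfolding psi_def by (auto intro: Least_le)
  then show False using psi_eq by simp
qed

lemma Int_member_hyperplane:
  assumes "A \<in> S" "\<not> T \<subseteq> A"
  shows "A \<inter> T \<in> subspaces_between {0} T (t + 1)"
proof -
  have sub: "vec.subspace (A \<inter> T)"
    using subspace_member[OF assms(1)] subspace_T by (rule vec.subspace_inter)
  have "vec.dim (A \<inter> T) \<noteq> t + 2"
  proof
    assume "vec.dim (A \<inter> T) = t + 2"
    then have "A \<inter> T = T" using vec.subspace_dim_equal[OF sub subspace_T] dim_T by auto
    then show False using assms(2) by blast
  qed
  moreover have "t + 1 \<le> vec.dim (A \<inter> T)"
    using dim_T_Int_member[OF assms(1)] by (simp add: Int_commute)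
  moreover have "vec.dim (A \<inter> T) \<le> t + 2"
    using vec.dim_subset[of "A \<inter> T" T] dim_T by auto
  ultimately show ?thesis using sub vec.subspace_0[OF sub] by (auto simp: subspaces_between_def)
qed

lemma dim_Int_member_ge_of_hyperplane:
  assumes "\<sigma> \<in> subspaces_between {0} T (t + 1)" "\<sigma> \<subseteq> \<tau>" "C \<in> S"
  shows "t \<le> vec.dim (\<tau> \<inter> C)"
proof -
  have \<sigma>: "vec.subspace \<sigma>" "vec.dim \<sigma> = t + 1" "\<sigma> \<subseteq> T"
    using assms(1) by (auto simp: subspaces_between_def)
  have TC: "vec.subspace (T \<inter> C)"
    using subspace_T subspace_member[OF assms(3)] by (rule vec.subspace_inter)
  have "vec.dim \<sigma> + vec.dim (T \<inter> C) \<le> vec.dim (\<sigma> \<inter> (T \<inter> C)) + vec.dim T"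
    using \<sigma> TC subspace_T by (intro dim_add_le_dim_Int_add) auto
  moreover have "vec.dim (\<sigma> \<inter> (T \<inter> C)) \<le> vec.dim (\<tau> \<inter> C)"
    using assms(2) by (intro vec.dim_subset) auto
  ultimately show ?thesis using \<sigma>(2) dim_T dim_T_Int_member[OF assms(3)] by linarith
qed

lemma card_hyperplane_extensions_le:
  assumes "\<sigma> \<in> subspaces_between {0} T (t + 1)" "B \<in> S"
  shows "real (card (subspaces_between \<sigma> (vec.span (B \<union> T)) (t + 2) - {T}))
    \<le> theta (real CARD('a)) (k - t) - 1"
proof -
  define F where "F = subspaces_between \<sigma> (vec.span (B \<union> T)) (t + 2)"
  have \<sigma>: "vec.subspace \<sigma>" "vec.dim \<sigma> = t + 1" "\<sigma> \<subseteq> T"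
    using assms(1) by (auto simp: subspaces_between_def)
  have "vec.dim (vec.span (B \<union> T)) + (t + 1) \<le> (k + 1) + (t + 2)"
    using dim_span_Un_add_dim_Int[OF subspace_member[OF assms(2)] subspace_T]
      dim_member[OF assms(2)] dim_T dim_T_Int_member[OF assms(2)]
    by (simp add: Int_commute)
  then have "real (card (subspaces_between \<sigma> (vec.span (B \<union> T)) (vec.dim \<sigma> + 1)))
      \<le> theta (real CARD('a)) (k - t)"
    using \<sigma> by (intro card_subspaces_between_Suc_le_theta) (auto intro: vec.span_base)
  then have "real (card F) \<le> theta (real CARD('a)) (k - t)" using \<sigma>(2) by (simp add: F_def)
  moreover have "T \<in> F"
    using \<sigma> subspace_T dim_T by (auto simp: F_def subspaces_between_def intro: vec.span_base)
  then have "0 < card F" by (auto simp: card_gt_0_iff intro: finite)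
  moreover have "card (F - {T}) = card F - 1" using \<open>T \<in> F\<close> by (simp add: card_Diff_singleton)
  ultimately show ?thesis by (simp add: F_def of_nat_diff)
qed

lemma exists_hyperplane_extension_in_member:
  assumes "A \<in> S" "\<not> T \<subseteq> A" "B \<in> S" "\<not> A \<inter> T \<subseteq> B"
  shows "\<exists>\<tau>\<in>subspaces_between (A \<inter> T) (vec.span (B \<union> T)) (t + 2) - {T}. \<tau> \<subseteq> A"
proof -
  have "A \<inter> T \<in> subspaces_between {0} T (t + 1)" by (rule Int_member_hyperplane[OF assms(1,2)])
  then have \<sigma>: "vec.subspace (A \<inter> T)" "vec.dim (A \<inter> T) = t + 1"
    by (auto simp: subspaces_between_def)
  have "\<not> A \<inter> B \<subseteq> A \<inter> T"
  proof
    assume AB: "A \<inter> B \<subseteq> A \<inter> T"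
    have "vec.subspace (A \<inter> B)" using subspace_member assms(1,3) by (intro vec.subspace_inter)
    then have "A \<inter> B = A \<inter> T"
      using vec.subspace_dim_equal[OF _ \<sigma>(1) AB] dim_Int_members[OF assms(1,3)] \<sigma>(2) by simp
    then show False using assms(4) by blast
  qed
  then obtain v where v: "v \<in> A" "v \<in> B" "v \<notin> A \<inter> T" by blast
  let ?\<tau> = "vec.span (insert v (A \<inter> T))"
  have "?\<tau> \<in> subspaces_between (A \<inter> T) A (t + 2)"
    using span_insert_mem_subspaces_between[OF \<sigma>(1) subspace_member[OF assms(1)] _ v(1) v(3)] \<sigma>(2)
    by auto
  moreover have "?\<tau> \<subseteq> vec.span (B \<union> T)" using v(2) by (intro vec.span_mono) auto
  moreover have "?\<tau> \<noteq> T" using calculation(1) assms(2) by (auto simp: subspaces_between_def)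
  ultimately show ?thesis by (auto simp: subspaces_between_def)
qed

lemma hyperplane_extension_cover:
  obtains Taus where "real (card Taus) \<le> theta (real CARD('a)) (t + 1) * (theta (real CARD('a)) (k - t) - 1)"
    and "T \<notin> Taus"
    and "\<And>\<tau>. \<tau> \<in> Taus \<Longrightarrow> vec.subspace \<tau> \<and> vec.dim \<tau> = t + 2 \<and> (\<forall>C\<in>S. t \<le> vec.dim (\<tau> \<inter> C))"
    and "\<And>A. A \<in> S \<Longrightarrow> T \<subseteq> A \<or> (\<exists>\<tau>\<in>Taus. \<tau> \<subseteq> A)"
proof -
  define H where "H = subspaces_between {0} T (t + 1)"
  obtain B where B: "\<And>\<sigma>. \<sigma> \<in> H \<Longrightarrow> B \<sigma> \<in> S \<and> \<not> \<sigma> \<subseteq> B \<sigma>"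
    using hyperplane_not_in_all_members unfolding H_def by metis
  define Taus where "Taus = (\<Union>\<sigma>\<in>H. subspaces_between \<sigma> (vec.span (B \<sigma> \<union> T)) (t + 2) - {T})"
  have "card Taus \<le> (\<Sum>\<sigma>\<in>H. card (subspaces_between \<sigma> (vec.span (B \<sigma> \<union> T)) (t + 2) - {T}))"
    unfolding Taus_def by (rule card_UN_le) simp
  then have "real (card Taus)
      \<le> (\<Sum>\<sigma>\<in>H. real (card (subspaces_between \<sigma> (vec.span (B \<sigma> \<union> T)) (t + 2) - {T})))"
    unfolding of_nat_sum[symmetric] of_nat_le_iff .
  also have "\<dots> \<le> (\<Sum>\<sigma>\<in>H. theta (real CARD('a)) (k - t) - 1)"
    using card_hyperplane_extensions_le B unfolding H_def by (intro sum_mono) auto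
  also have "\<dots> = theta (real CARD('a)) (t + 1) * (theta (real CARD('a)) (k - t) - 1)"
    using card_hyperplanes[OF subspace_T, of "t + 1"] dim_T by (simp add: H_def)
  finally have "real (card Taus) \<le> theta (real CARD('a)) (t + 1) * (theta (real CARD('a)) (k - t) - 1)" .
  moreover have "T \<notin> Taus" by (simp add: Taus_def)
  moreover have "vec.subspace \<tau> \<and> vec.dim \<tau> = t + 2 \<and> (\<forall>C\<in>S. t \<le> vec.dim (\<tau> \<inter> C))"
    if "\<tau> \<in> Taus" for \<tau>
    using that dim_Int_member_ge_of_hyperplane unfolding Taus_def H_def
    by (auto simp: subspaces_between_def)
  moreover have "T \<subseteq> A \<or> (\<exists>\<tau>\<in>Taus. \<tau> \<subseteq> A)" if "A \<in> S" for A
  proof (cases "T \<subseteq> A")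
    case False
    then have "A \<inter> T \<in> H" using Int_member_hyperplane that unfolding H_def by blast
    then have "\<exists>\<tau>\<in>Taus. \<tau> \<subseteq> A"
      using exists_hyperplane_extension_in_member[OF that False, of "B (A \<inter> T)"] B unfolding Taus_def by blast
    then show ?thesis ..
  qed simp
  ultimately show ?thesis using that by blast
qed

end

lemma card_le_of_psi_eq_Suc:
  assumes psi: "psi t S = t + 1" and Tset: "card (Tset t S) \<le> 2"
    and "t < k" and N: "2 * k - t + 2 \<le> CARD('n)"
  shows "real (card S)
    \<le> 2 * qbinom (real CARD('a)) (int CARD('n) - int t - 2) (int k - int t - 1)
      + (theta (real CARD('a)) (t + 1) * theta (real CARD('a)) (k - t) - theta (real CARD('a)) (t + 1) - 1)
        * theta (real CARD('a)) (k - t) * qbinom (real CARD('a)) (int CARD('n) - int t - 3) (int k - int t - 2)"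
proof -
  define q where "q = real CARD('a)"
  define c1 where "c1 = qbinom q (int CARD('n) - int t - 2) (int k - int t - 1)"
  define c2 where "c2 = qbinom q (int CARD('n) - int t - 3) (int k - int t - 2)"
  define th1 where "th1 = theta q (t + 1)"
  define thk where "thk = theta q (k - t)"
  have q: "2 \<le> q" unfolding q_def by (rule real_card_field_ge_2)
  have k: "k < CARD('n)" using N \<open>t < k\<close> by linarith
  obtain T where T: "T \<in> Tset t S" using Tset_nonempty \<open>t < k\<close> by fastforce
  obtain Taus where card_Taus: "real (card Taus) \<le> th1 * (thk - 1)" and "T \<notin> Taus"
    and Taus: "\<And>\<tau>. \<tau> \<in> Taus \<Longrightarrow> vec.subspace \<tau> \<and> vec.dim \<tau> = t + 2 \<and> (\<forall>C\<in>S. t \<le> vec.dim (\<tau> \<inter> C))"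
    and cover: "\<And>A. A \<in> S \<Longrightarrow> T \<subseteq> A \<or> (\<exists>\<tau>\<in>Taus. \<tau> \<subseteq> A)"
    using hyperplane_extension_cover[OF T psi] unfolding th1_def thk_def q_def by blast
  have "card S \<le> card {A \<in> S. T \<subseteq> A} + (\<Sum>\<tau>\<in>Taus. card {A \<in> S. \<tau> \<subseteq> A})"
    using cover by (intro card_le_card_containing_add_sum) (simp_all add: finite)
  then have "real (card S) \<le> real (card {A \<in> S. T \<subseteq> A}) + (\<Sum>\<tau>\<in>Taus. real (card {A \<in> S. \<tau> \<subseteq> A}))"
    unfolding of_nat_sum[symmetric] of_nat_add[symmetric] of_nat_le_iff .
  also have "\<dots> \<le> c1 + (real (card Taus) * (thk * c2) + (c1 - thk * c2))"
  proof (rule add_mono)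
    show "real (card {A \<in> S. T \<subseteq> A}) \<le> c1"
      using card_members_containing_le[OF subspace_T[OF T psi] k] dim_T[OF T psi]
      by (simp add: c1_def q_def algebra_simps)
    have "Taus \<inter> Tset t S \<subseteq> Tset t S - {T}" using \<open>T \<notin> Taus\<close> by blast
    then have "card (Taus \<inter> Tset t S) \<le> card (Tset t S - {T})" by (intro card_mono) (simp_all add: finite)
    then have "card (Taus \<inter> Tset t S) \<le> 1" using T Tset by (simp add: card_Diff_singleton)
    moreover have "thk * c2 \<le> c1"
      using theta_mult_qbinom_le_qbinom[OF q \<open>t < k\<close> N] by (simp add: thk_def c1_def c2_def)
    moreover have "real (card {A \<in> S. \<tau> \<subseteq> A}) \<le> (if \<tau> \<in> Tset t S then c1 else thk * c2)"
      if "\<tau> \<in> Taus" for \<tau>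
      using card_members_containing_le_cases[OF psi _ _ _ k] Taus[OF that]
      unfolding c1_def c2_def thk_def q_def by blast
    ultimately show "(\<Sum>\<tau>\<in>Taus. real (card {A \<in> S. \<tau> \<subseteq> A}))
        \<le> real (card Taus) * (thk * c2) + (c1 - thk * c2)"
      by (intro sum_le_card_mult_add) (simp_all add: finite)
  qed
  also have "\<dots> \<le> c1 + (th1 * (thk - 1) * (thk * c2) + (c1 - thk * c2))"
  proof -
    have "0 \<le> thk * c2"
      using q unfolding thk_def c2_def by (intro mult_nonneg_nonneg theta_nonneg qbinom_nonneg) auto
    then show ?thesis using mult_right_mono[OF card_Taus] by simp
  qed
  also have "\<dots> = 2 * c1 + (th1 * thk - th1 - 1) * thk * c2" by (simp add: algebra_simps)
  finally show ?thesis unfolding c1_def c2_def th1_def thk_def q_def .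
qed

end

theorem mainTheorem10:
  fixes S :: "('a::{field,finite} ^ 'n) set set" and k t :: nat
  defines "n \<equiv> int CARD('n) - 1" and "q \<equiv> real CARD('a)"
  assumes "n > 2 * int k - int t" and "k > t"
    and "maximal_t_intersecting k t S"
    and "psi t S = t + 1" and "card (Tset t S) \<le> 2"
  shows "real (card S) \<le> 2 * qbinom q (n - int t - 1) (int k - int t - 1)
     + (theta q (t + 1) * theta q (k - t) - theta q (t + 1) - 1) * theta q (k - t)
       * qbinom q (n - int t - 2) (int k - int t - 2)"
proof -
  interpret t_intersecting_family S k t
    using assms(5) by unfold_locales (simp add: maximal_t_intersecting_def)
  have "2 * k - t + 2 \<le> CARD('n)" using assms(3,4) unfolding n_def by linarith
  then show ?thesis using card_le_of_psi_eq_Suc[OF assms(6,7,4)] unfolding n_def q_def by (simp add: algebra_simps)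
qed

end
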